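(* Let $f:\mathbb{X}\to\mathbb{R}$ be a finite measurable function and suppose there are $M<\infty$ and a set of positive measure on which $\frac1n|f\circ T^{-n}+f\circ T^n|<M$ for all sufficiently large $n$. Then $\limsup_n \frac1n|f\circ T^{2n}|\le 24M$ $\mu$-a.e. on $\mathbb{X}$.
   Context: Standing assumptions: $(\mathbb{X},\mathcal{X},\mu,T)$ is a probability space with $T$ an invertible, bi-measurable, measure-preserving, ergodic transformation. *)

theory Defs
  imports "HOL-Probability.Probability"
begin

definition invertible_mpt :: "'a measure \<Rightarrow> ('a \<Rightarrow> 'a) \<Rightarrow> bool" where
  "invertible_mpt M T \<longleftrightarrow>
     bij_betw T (space M) (space M) \<and>
     T \<in> measurable M M \<and>
     the_inv_into (space M) T \<in> measurable M M \<and>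
     (\<forall>A \<in> sets M. emeasure M (T -` A \<inter> space M) = emeasure M A)"

definition ergodic :: "'a measure \<Rightarrow> ('a \<Rightarrow> 'a) \<Rightarrow> bool" where
  "ergodic M T \<longleftrightarrow>
     (\<forall>A \<in> sets M. T -` A \<inter> space M = A \<longrightarrow> emeasure M A = 0 \<or> emeasure M A = 1)"

definition Tinv :: "'a measure \<Rightarrow> ('a \<Rightarrow> 'a) \<Rightarrow> 'a \<Rightarrow> 'a" where
  "Tinv M T = the_inv_into (space M) T"

end

theory Submission
  imports Defs
begin

text \<open>
  Fix a set B of positive measure on which, for some N, the symmetric sums satisfy
  \<open>\<bar>f (T\<^sup>-\<^sup>k y) + f (T\<^sup>k y)\<bar> \<le> C k\<close> for all \<open>k \<ge> N\<close>, and write \<open>h i = f (T\<^sup>i x)\<close>.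
  Whenever \<open>T\<^sup>m x \<in> B\<close> we get \<open>\<bar>h (m - k) + h (m + k)\<bar> \<le> C k\<close> for \<open>N \<le> k \<le> m\<close>.
  By ergodicity almost every orbit visits B infinitely often, and by Kac's lemma and
  Borel--Cantelli almost surely every late visit at time m is followed by another one
  within m/2 steps. So every large n has a visit time m in [n, 3n/2]; reflecting 2n
  about m gives \<open>\<bar>h (2n)\<bar> \<le> C n + \<bar>h (2(m - n))\<bar>\<close> with \<open>m - n \<le> n/2\<close>, and iterating
  yields \<open>\<bar>h (2n)\<bar> \<le> 2Cn + O(1)\<close>: the constant 24C can be improved to 2C.
\<close>

lemma frequently_visits_in_every_window:
  fixes V :: "nat \<Rightarrow> bool"
  assumes frequent: "\<exists>\<^sub>F m in sequentially. V m"
    and gap: "\<forall>\<^sub>F m in sequentially. V m \<longrightarrow> (\<exists>j\<in>{1..m div 2}. V (j + m))"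
  shows "\<forall>\<^sub>F n in sequentially. \<exists>m. n \<le> m \<and> m \<le> n + n div 2 \<and> V m"
proof -
  obtain m0 where m0: "\<And>m. m \<ge> m0 \<Longrightarrow> V m \<Longrightarrow> \<exists>j\<in>{1..m div 2}. V (j + m)"
    using gap unfolding eventually_sequentially by blast
  obtain m1 where m1: "m1 \<ge> m0" "V m1"
    using frequent unfolding frequently_sequentially by blast
  have "\<exists>m. n \<le> m \<and> m \<le> n + n div 2 \<and> V m" if n: "n \<ge> m1" for n
  proof -
    define g where "g = Greatest (\<lambda>m. m \<le> n \<and> V m)"
    have g: "g \<le> n" "V g" "m1 \<le> g"
      using GreatestI_nat[of "\<lambda>m. m \<le> n \<and> V m" m1 n] Greatest_le_nat[of "\<lambda>m. m \<le> n \<and> V m" m1 n]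
        m1 n unfolding g_def by auto
    show ?thesis
    proof (cases "g = n")
      case True
      with g show ?thesis by auto
    next
      case False
      obtain j where j: "j \<in> {1..g div 2}" "V (j + g)"
        using m0[of g] g m1 by auto
      have "\<not> j + g \<le> n"
        using Greatest_le_nat[of "\<lambda>m. m \<le> n \<and> V m" "j + g" n] j unfolding g_def[symmetric] by auto
      moreover have "j + g \<le> n + n div 2"
        using j g div_le_mono[of g n 2] by simp
      ultimately show ?thesis
        using j by (intro exI[of _ "j + g"]) auto
    qed
  qed
  then show ?thesis
    unfolding eventually_sequentially by blast
qed

lemma linear_bound_of_halving_recursion:
  fixes a :: "nat \<Rightarrow> real" and C :: real
  assumes "C \<ge> 0"
    and rec: "\<And>n. n \<ge> n1 \<Longrightarrow> \<exists>j\<le>n div 2. a n \<le> C * n + a j"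
  shows "\<exists>K. \<forall>n. a n \<le> 2 * C * n + K"
proof
  define K where "K = (\<Sum>i\<le>n1. \<bar>a i\<bar>)"
  show "\<forall>n. a n \<le> 2 * C * n + K"
  proof
    fix n show "a n \<le> 2 * C * n + K"
    proof (induction n rule: less_induct)
      case (less n)
      show ?case
      proof (cases "n \<le> n1")
        case True
        then have "a n \<le> K"
          unfolding K_def using member_le_sum[of n "{..n1}" "\<lambda>i. \<bar>a i\<bar>"] by auto
        moreover have "0 \<le> 2 * C * n"
          using \<open>C \<ge> 0\<close> by simp
        ultimately show ?thesis by linarith
      next
        case False
        then obtain j where j: "j \<le> n div 2" "a n \<le> C * n + a j"
          using rec[of n] by force
        then have "2 * real j \<le> real n" "j < n"
          using False by linarith+
        with less have "a j \<le> C * (2 * real j) + K" by (simp add: algebra_simps)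
        also have "C * (2 * real j) \<le> C * n"
          using \<open>2 * real j \<le> real n\<close> \<open>C \<ge> 0\<close> by (rule mult_left_mono)
        finally show ?thesis
          using j(2) by simp
      qed
    qed
  qed
qed

lemma limsup_divide_le_of_linear_bound:
  fixes a :: "nat \<Rightarrow> real" and c K :: real
  assumes bound: "\<And>n. a n \<le> c * n + K"
  shows "limsup (\<lambda>n. ereal (a n / real n)) \<le> ereal c"
proof -
  have "\<forall>\<^sub>F n in sequentially. ereal (a n / real n) \<le> ereal (c + K / real n)"
    unfolding eventually_sequentially
  proof (intro exI[of _ 1] allI impI)
    fix n :: nat assume "1 \<le> n"
    then have "a n / real n \<le> (c * n + K) / real n"
      using bound[of n] by (simp add: divide_right_mono)
    also have "\<dots> = c + K / real n"
      using \<open>1 \<le> n\<close> by (simp add: field_simps)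
    finally show "ereal (a n / real n) \<le> ereal (c + K / real n)" by simp
  qed
  then have "limsup (\<lambda>n. ereal (a n / real n)) \<le> limsup (\<lambda>n. ereal (c + K / real n))"
    by (rule Limsup_mono)
  also have "\<dots> = ereal c"
  proof (rule lim_imp_Limsup)
    have "(\<lambda>n. c + K / real n) \<longlonglongrightarrow> c + 0"
      by (intro tendsto_add tendsto_const lim_const_over_n)
    then show "(\<lambda>n. ereal (c + K / real n)) \<longlonglongrightarrow> ereal c"
      by (simp add: tendsto_ereal)
  qed simp
  finally show ?thesis .
qed

lemma limsup_double_index_le:
  fixes V :: "nat \<Rightarrow> bool" and h :: "nat \<Rightarrow> real" and C :: real
  assumes frequent: "\<exists>\<^sub>F m in sequentially. V m"
    and gap: "\<forall>\<^sub>F m in sequentially. V m \<longrightarrow> (\<exists>j\<in>{1..m div 2}. V (j + m))"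
    and symmetric: "\<And>m k. V m \<Longrightarrow> N \<le> k \<Longrightarrow> 0 < k \<Longrightarrow> k \<le> m \<Longrightarrow> \<bar>h (m - k) + h (m + k)\<bar> \<le> C * k"
    and "C \<ge> 0"
  shows "limsup (\<lambda>n. ereal (\<bar>h (2 * n)\<bar> / real n)) \<le> ereal (2 * C)"
proof -
  obtain n0 where n0: "\<And>n. n \<ge> n0 \<Longrightarrow> \<exists>m. n \<le> m \<and> m \<le> n + n div 2 \<and> V m"
    using frequently_visits_in_every_window[OF frequent gap] unfolding eventually_sequentially by blast
  have "\<exists>j\<le>n div 2. \<bar>h (2 * n)\<bar> \<le> C * n + \<bar>h (2 * j)\<bar>" if n: "n \<ge> n0 + 2 * N + 1" for n
  proof -
    obtain m where m: "n \<le> m" "m \<le> n + n div 2" "V m"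
      using n0[of n] n by auto
    \<comment> \<open>Reflecting about the visit time m maps 2n to 2(m - n), an index at most n.\<close>
    define k where "k = 2 * n - m"
    have k: "N \<le> k" "0 < k" "k \<le> m" "k \<le> n" "m - k = 2 * (m - n)" "m + k = 2 * n"
      using m n unfolding k_def by linarith+
    have "\<bar>h (2 * (m - n)) + h (2 * n)\<bar> \<le> C * k"
      using symmetric[OF m(3) k(1-3)] k(5,6) by simp
    also have "C * k \<le> C * n"
      using k(4) \<open>C \<ge> 0\<close> by (simp add: mult_left_mono)
    finally show ?thesis
      using m by (intro exI[of _ "m - n"]) auto
  qed
  then obtain K where "\<And>n. \<bar>h (2 * n)\<bar> \<le> 2 * C * n + K"
    using linear_bound_of_halving_recursion[OF \<open>C \<ge> 0\<close>, of "n0 + 2 * N + 1" "\<lambda>n. \<bar>h (2 * n)\<bar>"] by blast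
  then show ?thesis
    by (rule limsup_divide_le_of_linear_bound)
qed

lemma summable_comp_div2:
  fixes g :: "nat \<Rightarrow> real"
  assumes "summable g" "\<And>n. 0 \<le> g n"
  shows "summable (\<lambda>m. g (m div 2))"
proof (rule summableI_nonneg_bounded)
  have double: "(\<Sum>m<2 * n. g (m div 2)) = 2 * (\<Sum>i<n. g i)" for n
  proof (induction n)
    case (Suc n)
    have "2 * Suc n = Suc (Suc (2 * n))" by simp
    with Suc show ?case by simp
  qed simp
  fix n
  have "(\<Sum>m<n. g (m div 2)) \<le> (\<Sum>m<2 * n. g (m div 2))"
    by (rule sum_mono2) (auto simp: assms)
  also have "\<dots> \<le> 2 * suminf g"
    unfolding double using sum_le_suminf[OF assms(1), of "{..<n}"] assms(2) by auto
  finally show "(\<Sum>m<n. g (m div 2)) \<le> 2 * suminf g" .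
qed (use assms in auto)

lemma vimage_frequently_funpow_eq:
  assumes "T ` S \<subseteq> S"
  shows "T -` {x \<in> S. \<exists>\<^sub>F m in sequentially. (T ^^ m) x \<in> B} \<inter> S
    = {x \<in> S. \<exists>\<^sub>F m in sequentially. (T ^^ m) x \<in> B}"
proof -
  have "(\<exists>\<^sub>F m in sequentially. (T ^^ m) (T x) \<in> B) \<longleftrightarrow> (\<exists>\<^sub>F m in sequentially. (T ^^ m) x \<in> B)" for x
  proof -
    have "(T ^^ m) (T x) = (T ^^ Suc m) x" for m
      by (simp only: funpow_Suc_right o_apply)
    then show ?thesis
      unfolding frequently_def using eventually_sequentially_Suc[of "\<lambda>m. (T ^^ m) x \<notin> B"] by presburger
  qed
  with assms show ?thesis
    by auto
qed

lemma exists_emeasure_pos_level_set: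
  fixes P :: "nat \<Rightarrow> 'a \<Rightarrow> bool"
  assumes "A \<in> sets M" "emeasure M A > 0" "\<And>x. x \<in> A \<Longrightarrow> \<exists>n. P n x"
    and "\<And>n. {x \<in> space M. P n x} \<in> sets M"
  shows "\<exists>n. emeasure M {x \<in> space M. P n x} > 0"
proof (rule ccontr)
  assume "\<nexists>n. emeasure M {x \<in> space M. P n x} > 0"
  then have "emeasure M (\<Union>n. {x \<in> space M. P n x}) = 0"
    by (intro emeasure_UN_eq_0) (auto simp: assms(4) not_gr_zero)
  moreover have "emeasure M A \<le> emeasure M (\<Union>n. {x \<in> space M. P n x})"
    using assms(3,4) sets.sets_into_space[OF assms(1)]
    by (intro emeasure_mono sets.countable_nat_UN) auto
  ultimately show False
    using assms(2) by simp
qed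

locale invertible_mpt_prob = prob_space M for M :: "'a measure" +
  fixes T :: "'a \<Rightarrow> 'a"
  assumes invertible: "invertible_mpt M T"
begin

lemma measurable_T [measurable]: "T \<in> measurable M M"
  using invertible unfolding invertible_mpt_def by auto

lemma measurable_Tinv [measurable]: "Tinv M T \<in> measurable M M"
  using invertible unfolding invertible_mpt_def Tinv_def by auto

lemma T_space: "x \<in> space M \<Longrightarrow> T x \<in> space M"
  using measurable_space[OF measurable_T] .

lemma funpow_T_space: "x \<in> space M \<Longrightarrow> (T ^^ n) x \<in> space M"
  using measurable_space[OF measurable_compose_n[OF measurable_T]] .

lemma funpow_Tinv_funpow_T:
  assumes "x \<in> space M" "k \<le> m"
  shows "(Tinv M T ^^ k) ((T ^^ m) x) = (T ^^ (m - k)) x"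
  using assms(2)
proof (induction k)
  case (Suc k)
  then have "m - k = Suc (m - Suc k)" by simp
  moreover have "Tinv M T (T y) = y" if "y \<in> space M" for y
    using invertible that unfolding invertible_mpt_def Tinv_def bij_betw_def
    by (auto intro: the_inv_into_f_f)
  ultimately show ?case
    using Suc assms(1) by (simp add: funpow_T_space)
qed simp

lemma vimage_Suc_funpow_T:
  "(T ^^ Suc n) -` A \<inter> space M = T -` ((T ^^ n) -` A \<inter> space M) \<inter> space M"
  using T_space by (auto simp: funpow_Suc_right simp del: funpow.simps)

lemma prob_vimage_T: "A \<in> sets M \<Longrightarrow> prob (T -` A \<inter> space M) = prob A"
  using invertible unfolding invertible_mpt_def measure_def by simp

lemma prob_vimage_funpow_T:
  assumes "A \<in> sets M"
  shows "prob ((T ^^ n) -` A \<inter> space M) = prob A"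
proof (induction n)
  case (Suc n)
  have "(T ^^ n) -` A \<inter> space M \<in> sets M"
    using assms by measurable
  with Suc show ?case
    unfolding vimage_Suc_funpow_T by (simp only: prob_vimage_T)
qed (simp add: sets.Int_space_eq2 assms)

definition no_return_until :: "'a set \<Rightarrow> nat \<Rightarrow> 'a set" where
  "no_return_until B m = {y \<in> space M. y \<in> B \<and> (\<forall>j\<in>{1..m}. (T ^^ j) y \<notin> B)}"

lemma no_return_until_sets [measurable]:
  assumes [measurable]: "B \<in> sets M"
  shows "no_return_until B m \<in> sets M"
  unfolding no_return_until_def by measurable

lemma summable_prob_no_return_until:
  assumes [measurable]: "B \<in> sets M"
  shows "summable (\<lambda>m. prob (no_return_until B m))"
proof -
  define H where "H m = {z \<in> space M. \<forall>j<m. (T ^^ j) z \<notin> B}" for m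
  have [measurable]: "H m \<in> sets M" for m
    unfolding H_def by measurable
  \<comment> \<open>Kac's argument: by invariance of the measure, the probabilities of H m telescope.\<close>
  have split: "T -` H m \<inter> space M = H (Suc m) \<union> no_return_until B m" for m
  proof -
    have "{1..m} = Suc ` {..<m}"
      by (simp add: image_Suc_lessThan)
    then show ?thesis
      unfolding H_def no_return_until_def All_less_Suc2
      using T_space by (auto simp: funpow_Suc_right simp del: funpow.simps)
  qed
  have step: "prob (H m) = prob (H (Suc m)) + prob (no_return_until B m)" for m
  proof -
    have "prob (H m) = prob (T -` H m \<inter> space M)"
      by (simp add: prob_vimage_T)
    also have "\<dots> = prob (H (Suc m) \<union> no_return_until B m)"
      by (simp only: split)
    also have "\<dots> = prob (H (Suc m)) + prob (no_return_until B m)"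
      by (rule finite_measure_Union) (auto simp: H_def no_return_until_def)
    finally show ?thesis .
  qed
  have telescope: "(\<Sum>m<n. prob (no_return_until B m)) = prob (H 0) - prob (H n)" for n
  proof (induction n)
    case (Suc n)
    then show ?case using step[of n] by simp
  qed simp
  show ?thesis
  proof (rule summableI_nonneg_bounded)
    show "(\<Sum>m<n. prob (no_return_until B m)) \<le> 1" for n
      using telescope[of n] measure_nonneg[of M "H n"] prob_le_1[of "H 0"] by linarith
  qed simp
qed

lemma AE_eventually_return_within_half:
  assumes [measurable]: "B \<in> sets M"
  shows "AE x in M. \<forall>\<^sub>F m in sequentially.
           (T ^^ m) x \<in> B \<longrightarrow> (\<exists>j\<in>{1..m div 2}. (T ^^ (j + m)) x \<in> B)"
proof -
  define F where "F m = (T ^^ m) -` no_return_until B (m div 2) \<inter> space M" for m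
  have [measurable]: "F m \<in> sets M" for m
    unfolding F_def by measurable
  have "summable (\<lambda>m. prob (F m))"
    unfolding F_def prob_vimage_funpow_T[OF no_return_until_sets[OF assms]]
    by (rule summable_comp_div2[OF summable_prob_no_return_until[OF assms]]) simp
  then have "AE x in M. \<forall>\<^sub>F m in sequentially. x \<in> space M - F m"
    by (intro borel_cantelli_AE1) (auto simp: emeasure_eq_measure)
  then show ?thesis
  proof eventually_elim
    case (elim x)
    then show ?case
    proof (rule eventually_mono)
      fix m assume "x \<in> space M - F m"
      then have "(T ^^ m) x \<notin> no_return_until B (m div 2)" "(T ^^ m) x \<in> space M"
        by (auto simp: F_def funpow_T_space)
      moreover have "(T ^^ j) ((T ^^ m) x) = (T ^^ (j + m)) x" for j
        by (simp only: funpow_add o_apply)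
      ultimately show "(T ^^ m) x \<in> B \<longrightarrow> (\<exists>j\<in>{1..m div 2}. (T ^^ (j + m)) x \<in> B)"
        unfolding no_return_until_def by simp
    qed
  qed
qed

lemma AE_frequently_visits:
  assumes [measurable]: "B \<in> sets M" and "prob B > 0" and "ergodic M T"
  shows "AE x in M. \<exists>\<^sub>F m in sequentially. (T ^^ m) x \<in> B"
proof -
  define G where "G = {x \<in> space M. \<exists>\<^sub>F m in sequentially. (T ^^ m) x \<in> B}"
  define W where "W k = {x \<in> space M. \<forall>m\<ge>k. (T ^^ m) x \<notin> B}" for k
  have G [measurable]: "G \<in> sets M" and [measurable]: "W k \<in> sets M" for k
    unfolding G_def W_def frequently_sequentially by measurable
  have "T ` space M \<subseteq> space M"
    using T_space by blast
  then have "T -` G \<inter> space M = G"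
    unfolding G_def by (rule vimage_frequently_funpow_eq)
  then have "emeasure M G = 0 \<or> emeasure M G = 1"
    using \<open>ergodic M T\<close> G unfolding ergodic_def by (simp only: Ball_def)
  moreover have "prob G > 0"
  proof -
    have "prob (W k) \<le> 1 - prob B" for k
    proof -
      have "prob (W k) + prob ((T ^^ k) -` B \<inter> space M) = prob (W k \<union> ((T ^^ k) -` B \<inter> space M))"
        by (rule finite_measure_Union[symmetric]) (auto simp: W_def)
      also have "\<dots> \<le> 1"
        by (rule prob_le_1)
      finally show ?thesis
        using prob_vimage_funpow_T[of B k] by simp
    qed
    moreover have "(\<lambda>k. prob (W k)) \<longlonglongrightarrow> prob (\<Union>k. W k)"
      by (rule finite_Lim_measure_incseq) (auto simp: incseq_def W_def)
    ultimately have "prob (\<Union>k. W k) \<le> 1 - prob B"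
      by (intro LIMSEQ_le_const2) auto
    moreover have "space M - G = (\<Union>k. W k)"
      unfolding G_def W_def frequently_sequentially by auto
    ultimately show ?thesis
      using prob_compl[of G] \<open>prob B > 0\<close> by simp
  qed
  ultimately have "prob G = 1"
    by (auto simp: emeasure_eq_measure)
  then show ?thesis
    using prob_Collect_eq_1[of "\<lambda>x. \<exists>\<^sub>F m in sequentially. (T ^^ m) x \<in> B"] G
    unfolding G_def by blast
qed

lemma AE_limsup_double_orbit_le:
  fixes f :: "'a \<Rightarrow> real" and C :: real
  assumes [measurable]: "B \<in> sets M" and "prob B > 0" and "ergodic M T" and "C \<ge> 0"
    and symmetric: "\<And>y k. y \<in> B \<Longrightarrow> N \<le> k \<Longrightarrow> 0 < k \<Longrightarrow>
           \<bar>f ((Tinv M T ^^ k) y) + f ((T ^^ k) y)\<bar> \<le> C * k"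
  shows "AE x in M. limsup (\<lambda>n. ereal (\<bar>f ((T ^^ (2 * n)) x)\<bar> / real n)) \<le> ereal (2 * C)"
  using AE_space AE_frequently_visits[OF assms(1-3)] AE_eventually_return_within_half[OF assms(1)]
proof eventually_elim
  case (elim x)
  show ?case
  proof (rule limsup_double_index_le[where V = "\<lambda>m. (T ^^ m) x \<in> B" and h = "\<lambda>i. f ((T ^^ i) x)"])
    fix m k assume "(T ^^ m) x \<in> B" "N \<le> k" "0 < k" "k \<le> m"
    moreover have "(T ^^ k) ((T ^^ m) x) = (T ^^ (m + k)) x"
      by (simp only: add.commute[of m k] funpow_add o_apply)
    ultimately show "\<bar>f ((T ^^ (m - k)) x) + f ((T ^^ (m + k)) x)\<bar> \<le> C * k"
      using symmetric[of "(T ^^ m) x" k] funpow_Tinv_funpow_T[OF elim(1)] by simp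
  qed (use elim \<open>C \<ge> 0\<close> in auto)
qed

end

theorem mainTheorem10:
  fixes M :: "'a measure" and T :: "'a \<Rightarrow> 'a" and f :: "'a \<Rightarrow> real" and C :: real
  assumes "prob_space M"
    and "invertible_mpt M T"
    and "ergodic M T"
    and "f \<in> borel_measurable M"
    and "\<exists>A \<in> sets M. emeasure M A > 0 \<and>
           (\<forall>x \<in> A. \<exists>N. \<forall>n \<ge> N.
              \<bar>f ((Tinv M T ^^ n) x) + f ((T ^^ n) x)\<bar> / real n < C)"
  shows "AE x in M. limsup (\<lambda>n. ereal (\<bar>f ((T ^^ (2 * n)) x)\<bar> / real n)) \<le> ereal (24 * C)"
proof -
  interpret invertible_mpt_prob M T
    using assms(1,2) by (simp add: invertible_mpt_prob_def invertible_mpt_prob_axioms_def)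
  note [measurable] = assms(4)
  define B where "B N = {y \<in> space M. \<forall>k\<ge>N. \<bar>f ((Tinv M T ^^ k) y) + f ((T ^^ k) y)\<bar> / real k < C}" for N
  have B_sets [measurable]: "B N \<in> sets M" for N
    unfolding B_def by measurable
  obtain A where A: "A \<in> sets M" "emeasure M A > 0"
    "\<And>y. y \<in> A \<Longrightarrow> \<exists>N. \<forall>k\<ge>N. \<bar>f ((Tinv M T ^^ k) y) + f ((T ^^ k) y)\<bar> / real k < C"
    using assms(5) by blast
  have "\<exists>N. emeasure M (B N) > 0"
    unfolding B_def by (rule exists_emeasure_pos_level_set[OF A(1,2)]) (use A(3) B_sets in \<open>simp_all add: B_def\<close>)
  then obtain N where "emeasure M (B N) > 0"
    by blast
  then have "prob (B N) > 0" and "B N \<noteq> {}"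
    by (auto simp: emeasure_eq_measure)
  then obtain y where "\<forall>k\<ge>N. \<bar>f ((Tinv M T ^^ k) y) + f ((T ^^ k) y)\<bar> / real k < C"
    unfolding B_def by blast
  then have "\<bar>f ((Tinv M T ^^ Suc N) y) + f ((T ^^ Suc N) y)\<bar> / real (Suc N) < C"
    using le_SucI by blast
  then have "C > 0"
    by (smt (verit) divide_nonneg_nonneg abs_ge_zero of_nat_0_le_iff)
  have "AE x in M. limsup (\<lambda>n. ereal (\<bar>f ((T ^^ (2 * n)) x)\<bar> / real n)) \<le> ereal (2 * C)"
  proof (rule AE_limsup_double_orbit_le[OF B_sets \<open>prob (B N) > 0\<close> assms(3)])
    show "\<bar>f ((Tinv M T ^^ k) z) + f ((T ^^ k) z)\<bar> \<le> C * k" if "z \<in> B N" "N \<le> k" "0 < k" for z k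
      using that by (auto simp: B_def divide_less_eq mult.commute)
  qed (use \<open>C > 0\<close> in simp)
  then show ?thesis
    by (elim eventually_mono) (erule order_trans, use \<open>C > 0\<close> in simp)
qed

end
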